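(* Let $4\le\beta\le n-2$ and let $\gamma_1,\gamma_2,\gamma_3$ be integers with $\gamma_1,\gamma_2,\gamma_3\ge 2$ and $\gamma_1+\gamma_2+\gamma_3=n$. Then $\mathcal T_{(n),(\beta),(\gamma_1,\gamma_2,\gamma_3)}$ has infinitely many $G$-orbits.
   Context: $\mathbb F$ is an infinite field of characteristic $\ne 2$. Equip $\mathbb F^{2n}$ (canonical basis $e_1,\ldots,e_{2n}$) with the symmetric bilinear form $(e_i,e_j)=\delta_{i,2n+1-j}$, and let $G={\rm O}_{2n}(\mathbb F)$ be its isometry group. A subspace $V$ is isotropic if $(V,V)=\{0\}$. For a sequence ${\bf a}=(\alpha_1,\ldots,\alpha_p)$ of positive integers with $\sum\alpha_j\le n$, $M_{\bf a}$ is the set of flags $V_1\subset\cdots\subset V_p$ in $\mathbb F^{2n}$ with $\dim V_j=\alpha_1+\cdots+\alpha_j$ and $V_p$ isotropic. $\mathcal T_{{\bf a},{\bf b},{\bf c}}=M_{\bf a}\times M_{\bf b}\times M_{\bf c}$ with the diagonal $G$-action. *)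

theory Defs
  imports Complex_Main "HOL-Library.Function_Algebras"
begin

text \<open>Vectors of F^(2n) are functions nat => F supported on {0..<2n};
  index i (0-based) corresponds to the basis vector e_(i+1).\<close>

type_synonym 'a vec = "nat \<Rightarrow> 'a"

definition vsmult :: "'a::field \<Rightarrow> 'a vec \<Rightarrow> 'a vec" where
  "vsmult c v = (\<lambda>i. c * v i)"

definition ambient :: "nat \<Rightarrow> ('a::field) vec set" where
  "ambient n = {v. \<forall>i\<ge>2*n. v i = 0}"

definition form :: "nat \<Rightarrow> ('a::field) vec \<Rightarrow> 'a vec \<Rightarrow> 'a" where
  "form n v w = (\<Sum>i<2*n. v i * w (2*n - 1 - i))"

definition subsp :: "('a::field) vec set \<Rightarrow> bool" where
  "subsp V = module.subspace vsmult V"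

definition vdim :: "('a::field) vec set \<Rightarrow> nat" where
  "vdim V = vector_space.dim vsmult V"

definition isotropic :: "nat \<Rightarrow> ('a::field) vec set \<Rightarrow> bool" where
  "isotropic n V \<longleftrightarrow> (\<forall>v\<in>V. \<forall>w\<in>V. form n v w = 0)"

definition orth_group :: "nat \<Rightarrow> (('a::field) vec \<Rightarrow> 'a vec) set" where
  "orth_group n = {g. bij_betw g (ambient n) (ambient n)
      \<and> (\<forall>u\<in>ambient n. \<forall>v\<in>ambient n. g (u + v) = g u + g v)
      \<and> (\<forall>c. \<forall>v\<in>ambient n. g (vsmult c v) = vsmult c (g v))
      \<and> (\<forall>u\<in>ambient n. \<forall>v\<in>ambient n. form n (g u) (g v) = form n u v)}"

definition flags :: "nat \<Rightarrow> nat list \<Rightarrow> ('a::field) vec set list set" where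
  "flags n a = {Vs. length Vs = length a
      \<and> (\<forall>j<length a. subsp (Vs ! j) \<and> Vs ! j \<subseteq> ambient n
           \<and> vdim (Vs ! j) = sum_list (take (Suc j) a))
      \<and> (\<forall>j. Suc j < length a \<longrightarrow> Vs ! j \<subseteq> Vs ! Suc j)
      \<and> (a \<noteq> [] \<longrightarrow> isotropic n (last Vs))}"

definition triples :: "nat \<Rightarrow> nat list \<Rightarrow> nat list \<Rightarrow> nat list \<Rightarrow>
    (('a::field) vec set list \<times> 'a vec set list \<times> 'a vec set list) set" where
  "triples n a b c = flags n a \<times> flags n b \<times> flags n c"

definition act_flag :: "('a vec \<Rightarrow> 'a vec) \<Rightarrow> 'a vec set list \<Rightarrow> 'a vec set list" where
  "act_flag g Vs = map (\<lambda>V. g ` V) Vs"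

definition orbit_rel :: "nat \<Rightarrow> nat list \<Rightarrow> nat list \<Rightarrow> nat list \<Rightarrow>
    ((('a::field) vec set list \<times> 'a vec set list \<times> 'a vec set list) \<times>
     ('a vec set list \<times> 'a vec set list \<times> 'a vec set list)) set" where
  "orbit_rel n a b c = {((x1,x2,x3),(y1,y2,y3)).
      (x1,x2,x3) \<in> triples n a b c \<and> (y1,y2,y3) \<in> triples n a b c \<and>
      (\<exists>g\<in>orth_group n. act_flag g x1 = y1 \<and> act_flag g x2 = y2 \<and> act_flag g x3 = y3)}"

end

theory Submission
  imports Defs "HOL-Library.Set_Algebras"
begin

text \<open>Write u i for unit_vec i (coordinates are 0-based); the form pairs u i with u (2n-1-i).
  For every field element t we write down a triple (L, W t, U1 \<subseteq> U2 \<subseteq> U3) in which L and U3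
  are complementary coordinate Lagrangians, the U_k are coordinate subspaces, and only the
  isotropic subspace W t depends on t. Intersections, sums and orthogonal complements produce from
  any triple four subspaces D1, ..., D4 of L, and an isometry carrying one triple to another
  carries each D_k to the corresponding one. For our family all D_k lie in L \<inter> (U3 + W t), whose
  elements are determined by their coordinates 4, 5, 2n-2, 2n-1; they contain respectively
  d1 = u 3 + u 4, d4 t = t u 3 + u 4 + u 5, d4 t - d1 and t d1 - d4 t, and each is cut out by two
  linear equations. If an isometry fixes L and the flag and maps W t to W s, the image of d1 must
  satisfy a linear system which, as in a cross-ratio computation, forces it to vanish unless
  t = s. Since isometries are injective, t = s, and the infinitely many parameters give infinitely
  many orbits.\<close>

interpretation VS: vector_space "vsmult :: 'a::field \<Rightarrow> 'a vec \<Rightarrow> 'a vec"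
  by unfold_locales (auto simp: vsmult_def algebra_simps fun_eq_iff)

definition unit_vec :: "nat \<Rightarrow> 'a::field vec" where
  "unit_vec i = (\<lambda>j. if j = i then 1 else 0)"

lemma unit_vec_apply [simp]: "unit_vec i j = (if j = i then 1 else 0)"
  by (simp add: unit_vec_def)

lemma vsmult_apply [simp]: "vsmult c v i = c * v i"
  by (simp add: vsmult_def)

lemma sum_fun_apply: "(\<Sum>x\<in>A. f x) i = (\<Sum>x\<in>A. f x i :: 'a::comm_monoid_add)"
  by (induction A rule: infinite_finite_induct) auto

lemma form_add_left: "form n (u + v) w = form n u w + form n v w"
  by (simp add: form_def sum.distrib distrib_right)

lemma form_add_right: "form n w (u + v) = form n w u + form n w v"
  by (simp add: form_def sum.distrib distrib_left)

lemma form_diff_left: "form n (u - v) w = form n u w - form n v w"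
  by (simp add: form_def sum_subtractf left_diff_distrib)

lemma form_diff_right: "form n w (u - v) = form n w u - form n w v"
  by (simp add: form_def sum_subtractf right_diff_distrib)

lemma form_scale_left: "form n (vsmult c u) w = c * form n u w"
  by (simp add: form_def sum_distrib_left mult.assoc)

lemma form_scale_right: "form n w (vsmult c u) = c * form n w u"
  by (simp add: form_def sum_distrib_left mult.left_commute)

lemma form_neg_left: "form n (- u) w = - form n u w"
  by (simp add: form_def sum_negf)

lemma form_neg_right: "form n w (- u) = - form n w u"
  by (simp add: form_def sum_negf)

lemmas form_linear = form_add_left form_add_right form_diff_left form_diff_right
  form_scale_left form_scale_right form_neg_left form_neg_right

lemma form_sym: "form n u w = form n w u"
proof -
  have "form n u w = (\<Sum>i<2*n. u (2*n - 1 - i) * w i)"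
    unfolding form_def
    by (rule sum.reindex_bij_witness[where i="\<lambda>i. 2*n - 1 - i" and j="\<lambda>i. 2*n - 1 - i"]) auto
  then show ?thesis by (simp add: form_def mult.commute)
qed

lemma form_unit_vec_right:
  assumes "j < 2*n"
  shows "form n v (unit_vec j) = v (2*n - 1 - j)"
proof -
  have "form n v (unit_vec j) = (\<Sum>i<2*n. if i = 2*n - 1 - j then v i else 0)"
    unfolding form_def by (rule sum.cong) (use assms in auto)
  then show ?thesis using assms by simp
qed

lemma form_unit_vec_unit_vec:
  "p < 2*n \<Longrightarrow> q < 2*n \<Longrightarrow> form n (unit_vec p) (unit_vec q :: 'a::field vec) = (if p + q = 2*n - 1 then 1 else 0)"
  by (simp add: form_unit_vec_right) linarith

lemmas form_simps = form_linear form_unit_vec_unit_vec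

lemma ambient_subspace: "VS.subspace (ambient n)"
  by (auto simp: ambient_def VS.subspace_def)

lemma unit_vec_in_ambient: "i < 2*n \<Longrightarrow> unit_vec i \<in> ambient n"
  by (auto simp: ambient_def)

lemma span_subset_ambient: "B \<subseteq> ambient n \<Longrightarrow> VS.span B \<subseteq> ambient n"
  by (rule VS.span_minimal) (auto simp: ambient_subspace)

lemma subsp_span: "subsp (VS.span X)"
  by (simp add: subsp_def)

lemma plus_subset_ambient: "A \<subseteq> ambient n \<Longrightarrow> B \<subseteq> ambient n \<Longrightarrow> A + B \<subseteq> ambient n"
  by (force simp: set_plus_def ambient_def subset_iff)

lemma unit_vec_in_span: "p \<in> P \<Longrightarrow> unit_vec p \<in> VS.span (unit_vec ` P)"
  by (rule VS.span_base) auto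

lemma span_unit_vec_coord_eq_0:
  assumes "x \<in> VS.span (unit_vec ` P)" "i \<notin> P"
  shows "x i = 0"
  using assms(1)
proof (induction rule: VS.span_induct_alt)
  case (step c y z)
  then obtain p where "p \<in> P" "y = unit_vec p" by auto
  with step assms(2) show ?case by auto
qed simp

lemma form_span_left_eq_0:
  assumes "x \<in> VS.span B" "\<And>b. b \<in> B \<Longrightarrow> form n b z = 0"
  shows "form n x z = 0"
  using assms(1)
proof (induction rule: VS.span_induct_alt)
  case (step c y x)
  then show ?case using assms(2) by (simp only: form_linear) simp
qed (simp add: form_def)

lemma form_span_right_eq_0:
  assumes "x \<in> VS.span B" "\<And>b. b \<in> B \<Longrightarrow> form n z b = 0"
  shows "form n z x = 0"
  using form_span_left_eq_0[OF assms(1), of n z] assms(2) form_sym by metis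

lemma isotropic_span:
  assumes "\<And>b c. b \<in> B \<Longrightarrow> c \<in> B \<Longrightarrow> form n b c = 0"
  shows "isotropic n (VS.span B)"
  unfolding isotropic_def
proof (intro ballI)
  fix v w assume v: "v \<in> VS.span B" and w: "w \<in> VS.span B"
  have "form n b w = 0" if "b \<in> B" for b
    by (rule form_span_right_eq_0[OF w]) (use assms that in auto)
  then show "form n v w = 0" by (rule form_span_left_eq_0[OF v])
qed

lemma
  assumes pivot: "\<And>p. p \<in> P \<Longrightarrow> f p p \<noteq> (0::'a::field)"
    and off_pivot: "\<And>p q. p \<in> P \<Longrightarrow> q \<in> P \<Longrightarrow> p \<noteq> q \<Longrightarrow> f q p = 0"
  shows independent_pivots: "VS.independent (f ` P)"
    and inj_on_pivots: "inj_on f P"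
proof -
  show "inj_on f P"
    by (rule inj_onI) (metis pivot off_pivot)
  show "VS.independent (f ` P)"
    unfolding VS.independent_explicit_module
  proof (intro allI impI)
    fix t u v
    assume t: "finite t" "t \<subseteq> f ` P" and comb: "(\<Sum>v\<in>t. vsmult (u v) v) = 0" and v: "v \<in> t"
    obtain p where p: "p \<in> P" "v = f p" using t v by auto
    have rest: "(\<Sum>w\<in>t - {v}. u w * w p) = 0"
    proof (rule sum.neutral, intro ballI)
      fix w assume w: "w \<in> t - {v}"
      then obtain q where "q \<in> P" "w = f q" using t by auto
      with w p off_pivot show "u w * w p = 0" by auto
    qed
    have "0 = (\<Sum>w\<in>t. u w * w p)"
      using fun_cong[OF comb, of p] by (simp add: sum_fun_apply)
    also have "\<dots> = u v * v p + (\<Sum>w\<in>t - {v}. u w * w p)"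
      using t v by (simp add: sum.remove)
    also have "\<dots> = u v * v p"
      by (simp add: rest)
    finally show "u v = 0" using pivot p by simp
  qed
qed

lemma vdim_span_pivots:
  assumes "\<And>p. p \<in> P \<Longrightarrow> f p p \<noteq> (0::'a::field)"
    and "\<And>p q. p \<in> P \<Longrightarrow> q \<in> P \<Longrightarrow> p \<noteq> q \<Longrightarrow> f q p = 0"
  shows "vdim (VS.span (f ` P)) = card P"
  unfolding vdim_def
  using VS.dim_span_eq_card_independent[OF independent_pivots[of P f, OF assms]] card_image[OF inj_on_pivots[of P f, OF assms]]
  by simp

lemma vdim_span_unit_vec: "vdim (VS.span ((unit_vec :: nat \<Rightarrow> 'a::field vec) ` P)) = card P"
  by (rule vdim_span_pivots) auto

lemma isotropic_span_unit_vec: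
  assumes "\<And>p. p \<in> P \<Longrightarrow> p < 2*n" "\<And>p q. p \<in> P \<Longrightarrow> q \<in> P \<Longrightarrow> p + q \<noteq> 2*n - 1"
  shows "isotropic n (VS.span ((unit_vec :: nat \<Rightarrow> 'a::field vec) ` P))"
  by (rule isotropic_span) (use assms in \<open>auto simp: form_unit_vec_unit_vec\<close>)

lemma span_unit_vec_subset_ambient:
  "(\<And>p. p \<in> P \<Longrightarrow> p < 2*n) \<Longrightarrow> VS.span ((unit_vec :: nat \<Rightarrow> 'a::field vec) ` P) \<subseteq> ambient n"
  by (rule span_subset_ambient) (auto intro: unit_vec_in_ambient)

lemma orth_group_in_ambient: "g \<in> orth_group n \<Longrightarrow> x \<in> ambient n \<Longrightarrow> g x \<in> ambient n"
  by (auto simp: orth_group_def bij_betw_def)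

lemma orth_group_inj_on: "g \<in> orth_group n \<Longrightarrow> inj_on g (ambient n)"
  by (auto simp: orth_group_def bij_betw_def)

lemma orth_group_surj: "g \<in> orth_group n \<Longrightarrow> g ` ambient n = ambient n"
  by (auto simp: orth_group_def bij_betw_def)

lemma orth_group_add:
  "g \<in> orth_group n \<Longrightarrow> x \<in> ambient n \<Longrightarrow> y \<in> ambient n \<Longrightarrow> g (x + y) = g x + g y"
  by (auto simp: orth_group_def)

lemma orth_group_scale: "g \<in> orth_group n \<Longrightarrow> x \<in> ambient n \<Longrightarrow> g (vsmult c x) = vsmult c (g x)"
  by (auto simp: orth_group_def)

lemma orth_group_form:
  "g \<in> orth_group n \<Longrightarrow> x \<in> ambient n \<Longrightarrow> y \<in> ambient n \<Longrightarrow> form n (g x) (g y) = form n x y"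
  by (auto simp: orth_group_def)

lemma orth_group_diff:
  assumes "g \<in> orth_group n" "x \<in> ambient n" "y \<in> ambient n"
  shows "g (x - y) = g x - g y"
proof -
  have "x - y = x + vsmult (-1) y" and "vsmult (-1) y \<in> ambient n"
    using assms(3) by (auto simp: fun_eq_iff ambient_def)
  then have "g (x - y) = g x + vsmult (-1) (g y)"
    using assms orth_group_add orth_group_scale by metis
  then show ?thesis by (simp add: fun_eq_iff)
qed

lemma orth_group_zero: "g \<in> orth_group n \<Longrightarrow> g 0 = 0"
  using orth_group_diff[of g n 0 0] by (simp add: ambient_def)

lemma id_in_orth_group: "id \<in> orth_group n"
  by (auto simp: orth_group_def)

definition perp :: "nat \<Rightarrow> 'a::field vec set \<Rightarrow> 'a vec set" where
  "perp n X = {v \<in> ambient n. \<forall>x\<in>X. form n v x = 0}"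

lemma perp_subset_ambient: "perp n X \<subseteq> ambient n"
  by (auto simp: perp_def)

lemma form_perp: "v \<in> perp n X \<Longrightarrow> x \<in> X \<Longrightarrow> form n v x = 0"
  by (auto simp: perp_def)

lemma form_plus_left_eq_0:
  assumes "v \<in> A + B" "\<And>a. a \<in> A \<Longrightarrow> form n a z = 0" "\<And>b. b \<in> B \<Longrightarrow> form n b z = 0"
  shows "form n v z = 0"
  using assms by (auto elim!: set_plus_elim simp: form_add_left)

lemma in_perp_span:
  assumes "z \<in> ambient n" "\<And>p. p \<in> P \<Longrightarrow> form n z (f p) = 0"
  shows "z \<in> perp n (VS.span (f ` P))"
  using assms form_span_right_eq_0[of _ "f ` P" n z] by (auto simp: perp_def)

lemma orth_group_image_Int:
  "g \<in> orth_group n \<Longrightarrow> A \<subseteq> ambient n \<Longrightarrow> B \<subseteq> ambient n \<Longrightarrow> g ` (A \<inter> B) = g ` A \<inter> g ` B"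
  by (meson inj_on_image_Int orth_group_inj_on)

lemma orth_group_image_plus:
  assumes "g \<in> orth_group n" "A \<subseteq> ambient n" "B \<subseteq> ambient n"
  shows "g ` (A + B) = g ` A + g ` B"
proof -
  have add: "g (a + b) = g a + g b" if "a \<in> A" "b \<in> B" for a b
    using orth_group_add[OF assms(1)] assms(2,3) that by blast
  show ?thesis
  proof (intro equalityI subsetI)
    fix v assume "v \<in> g ` (A + B)"
    then obtain a b where "a \<in> A" "b \<in> B" "v = g (a + b)"
      by (auto elim!: set_plus_elim)
    then show "v \<in> g ` A + g ` B"
      using add by (simp add: set_plus_intro)
  next
    fix v assume "v \<in> g ` A + g ` B"
    then obtain a b where "a \<in> A" "b \<in> B" "v = g a + g b"
      by (auto elim!: set_plus_elim)
    then show "v \<in> g ` (A + B)"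
      using add by (metis image_eqI set_plus_intro)
  qed
qed

lemma orth_group_image_perp:
  assumes g: "g \<in> orth_group n" and X: "X \<subseteq> ambient n"
  shows "g ` perp n X = perp n (g ` X)"
proof
  show "g ` perp n X \<subseteq> perp n (g ` X)"
  proof (rule image_subsetI)
    fix v assume v: "v \<in> perp n X"
    then have "v \<in> ambient n" by (simp add: perp_def)
    moreover have "form n (g v) (g x) = 0" if "x \<in> X" for x
      using orth_group_form[OF g \<open>v \<in> ambient n\<close>] X that form_perp[OF v] by auto
    ultimately show "g v \<in> perp n (g ` X)"
      using orth_group_in_ambient[OF g] by (auto simp: perp_def)
  qed
next
  show "perp n (g ` X) \<subseteq> g ` perp n X"
  proof
    fix v assume v: "v \<in> perp n (g ` X)"
    then obtain u where u: "u \<in> ambient n" "v = g u"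
      using orth_group_surj[OF g] by (auto simp: perp_def)
    have "form n u x = 0" if "x \<in> X" for x
    proof -
      have "form n u x = form n (g u) (g x)"
        using orth_group_form[OF g u(1)] X that by auto
      also have "\<dots> = 0"
        using form_perp[OF v] u(2) that by simp
      finally show ?thesis .
    qed
    then show "v \<in> g ` perp n X" using u by (auto simp: perp_def)
  qed
qed

text \<open>They are built from the triple by
  intersections, sums and orthogonal complements only, hence are transported by isometries.\<close>

definition D1 :: "nat \<Rightarrow> 'a::field vec set \<Rightarrow> 'a vec set \<Rightarrow> 'a vec set \<Rightarrow> 'a vec set \<Rightarrow> 'a vec set" where
  "D1 n L W U1 U3 = perp n U1 \<inter> L \<inter> (U3 + W)"

definition D2 :: "nat \<Rightarrow> 'a::field vec set \<Rightarrow> 'a vec set \<Rightarrow> 'a vec set \<Rightarrow> 'a vec set \<Rightarrow> 'a vec set" where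
  "D2 n L W U2 U3 = (U3 + W) \<inter> (perp n U2 \<inter> L + perp n W \<inter> L)"

definition D3 :: "nat \<Rightarrow> 'a::field vec set \<Rightarrow> 'a vec set \<Rightarrow> 'a vec set \<Rightarrow> 'a vec set \<Rightarrow> 'a vec set" where
  "D3 n L W U1 U3 = L \<inter> (U1 + W + U3 \<inter> perp n W)"

definition D4 :: "'a::field vec set \<Rightarrow> 'a vec set \<Rightarrow> 'a vec set \<Rightarrow> 'a vec set" where
  "D4 L W U2 = L \<inter> (U2 + W)"

lemma
  assumes g: "g \<in> orth_group n"
    and sub: "L \<subseteq> ambient n" "W \<subseteq> ambient n" "U1 \<subseteq> ambient n" "U2 \<subseteq> ambient n" "U3 \<subseteq> ambient n"
  shows orth_group_image_D1: "g ` D1 n L W U1 U3 = D1 n (g ` L) (g ` W) (g ` U1) (g ` U3)"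
    and orth_group_image_D2: "g ` D2 n L W U2 U3 = D2 n (g ` L) (g ` W) (g ` U2) (g ` U3)"
    and orth_group_image_D3: "g ` D3 n L W U1 U3 = D3 n (g ` L) (g ` W) (g ` U1) (g ` U3)"
    and orth_group_image_D4: "g ` D4 L W U2 = D4 (g ` L) (g ` W) (g ` U2)"
  using sub
  by (simp_all add: D1_def D2_def D3_def D4_def orth_group_image_Int[OF g] orth_group_image_plus[OF g]
      orth_group_image_perp[OF g] perp_subset_ambient plus_subset_ambient le_infI1 le_infI2)

lemma flags_singleI:
  "subsp V \<Longrightarrow> V \<subseteq> ambient n \<Longrightarrow> vdim V = k \<Longrightarrow> isotropic n V \<Longrightarrow> [V] \<in> flags n [k]"
  by (simp add: flags_def)

lemma flags_threeI:
  assumes "subsp A" "subsp B" "subsp C" "A \<subseteq> ambient n" "B \<subseteq> ambient n" "C \<subseteq> ambient n"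
    "vdim A = x" "vdim B = x + y" "vdim C = x + y + z" "A \<subseteq> B" "B \<subseteq> C" "isotropic n C"
  shows "[A, B, C] \<in> flags n [x, y, z]"
proof -
  have idx3: "j < 3 \<longleftrightarrow> j = 0 \<or> j = 1 \<or> j = 2" for j :: nat by auto
  show ?thesis
    unfolding flags_def using assms by (auto simp: idx3 less_Suc_eq)
qed

lemma orbit_rel_refl: "x \<in> triples n a b c \<Longrightarrow> (x, x) \<in> orbit_rel n a b c"
  using id_in_orth_group by (force simp: orbit_rel_def act_flag_def)

lemma infinite_quotient:
  assumes "infinite T" "\<And>t. t \<in> T \<Longrightarrow> f t \<in> A" "\<And>t. t \<in> T \<Longrightarrow> (f t, f t) \<in> r"
    and "\<And>s t. s \<in> T \<Longrightarrow> t \<in> T \<Longrightarrow> (f t, f s) \<in> r \<Longrightarrow> t = s"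
  shows "infinite (A // r)"
proof -
  have "inj_on (\<lambda>t. r `` {f t}) T"
  proof (rule inj_onI)
    fix s t assume st: "s \<in> T" "t \<in> T" and eq: "r `` {f s} = r `` {f t}"
    have "f t \<in> r `` {f s}"
      using assms(3)[OF st(2)] eq by simp
    then show "s = t"
      using assms(4)[OF st(2) st(1)] by simp
  qed
  then have "infinite ((\<lambda>t. r `` {f t}) ` T)"
    using assms(1) finite_imageD by blast
  moreover have "(\<lambda>t. r `` {f t}) ` T \<subseteq> A // r"
    using assms(2) by (auto simp: quotient_def)
  ultimately show ?thesis using infinite_super by blast
qed

locale triple_family =
  fixes m \<gamma>1 \<gamma>2 \<beta> :: nat
  assumes \<gamma>1: "2 \<le> \<gamma>1" and \<gamma>2: "2 \<le> \<gamma>2" and \<gamma>3: "\<gamma>1 + \<gamma>2 + 2 \<le> m + 6"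
    and \<beta>_lower: "4 \<le> \<beta>" and \<beta>_upper: "\<beta> + 2 \<le> m + 6"
begin

text \<open>Writing n as m + 6 lets the truncated differences 2 * n - k below simplify.\<close>

abbreviation "n \<equiv> m + 6"

lemmas parameters = \<gamma>1 \<gamma>2 \<gamma>3 \<beta>_lower \<beta>_upper

definition "U1_idx = {0, 2*n-6} \<union> {6..<\<gamma>1+4}"
definition "U2_idx = {0, 1, 2*n-6, 2*n-5} \<union> {6..<\<gamma>1+\<gamma>2+2}"
definition "U3_idx = {0, 1, 2, 2*n-6, 2*n-5, 2*n-4} \<union> {6..<n}"
definition "L_idx = {3, 4, 5, 2*n-3, 2*n-2, 2*n-1} \<union> {n..<2*n-6}"
definition "W_idx = {2, 5, 2*n-2, 2*n-1} \<union> {6..<\<beta>+2}"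

abbreviation U1 :: "'a::field vec set" where "U1 \<equiv> VS.span (unit_vec ` U1_idx)"
abbreviation U2 :: "'a::field vec set" where "U2 \<equiv> VS.span (unit_vec ` U2_idx)"
abbreviation U3 :: "'a::field vec set" where "U3 \<equiv> VS.span (unit_vec ` U3_idx)"
abbreviation L :: "'a::field vec set" where "L \<equiv> VS.span (unit_vec ` L_idx)"

definition w1 :: "'a::field vec" where
  "w1 = unit_vec 0 + unit_vec 1 + unit_vec 2 + unit_vec 3 + unit_vec 4"
definition w2 :: "'a::field \<Rightarrow> 'a vec" where
  "w2 t = unit_vec 0 + unit_vec 4 + unit_vec 5 + vsmult t (unit_vec 1 + unit_vec 3)"
definition w3 :: "'a::field vec" where
  "w3 = unit_vec (2*n-1) - unit_vec (2*n-5)"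
definition w4 :: "'a::field vec" where
  "w4 = unit_vec (2*n-2) - unit_vec (2*n-4)"

text \<open>The generator W_gen t p of W t has coordinate 1 at p and 0 at the other indices of W_idx.\<close>
definition W_gen :: "'a::field \<Rightarrow> nat \<Rightarrow> 'a vec" where
  "W_gen t p = (if p = 2 then w1 else if p = 5 then w2 t else if p = 2*n-1 then w3
     else if p = 2*n-2 then w4 else unit_vec p)"

abbreviation W :: "'a::field \<Rightarrow> 'a vec set" where "W t \<equiv> VS.span (W_gen t ` W_idx)"

lemmas W_gen_defs = W_idx_def W_gen_def w1_def w2_def w3_def w4_def

lemma U1_subset_U2: "U1 \<subseteq> U2"
  by (rule VS.span_mono) (use \<gamma>2 in \<open>auto simp: U1_idx_def U2_idx_def\<close>)

lemma U2_subset_U3: "U2 \<subseteq> U3"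
  by (rule VS.span_mono) (use \<gamma>3 in \<open>auto simp: U2_idx_def U3_idx_def\<close>)

lemma U1_subset_ambient: "U1 \<subseteq> ambient n"
  by (rule span_unit_vec_subset_ambient) (use \<gamma>3 in \<open>auto simp: U1_idx_def\<close>)

lemma U2_subset_ambient: "U2 \<subseteq> ambient n"
  by (rule span_unit_vec_subset_ambient) (use \<gamma>3 in \<open>auto simp: U2_idx_def\<close>)

lemma U3_subset_ambient: "U3 \<subseteq> ambient n"
  by (rule span_unit_vec_subset_ambient) (auto simp: U3_idx_def)

lemma L_subset_ambient: "L \<subseteq> ambient n"
  by (rule span_unit_vec_subset_ambient) (auto simp: L_idx_def)

lemma W_subset_ambient: "W t \<subseteq> ambient n"
  by (rule span_subset_ambient) (use \<beta>_upper in \<open>auto simp: W_gen_defs ambient_def\<close>)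

lemma isotropic_U3: "isotropic n U3"
  by (rule isotropic_span_unit_vec) (auto simp: U3_idx_def)

lemma isotropic_L: "isotropic n L"
  by (rule isotropic_span_unit_vec) (auto simp: L_idx_def)

lemma isotropic_W: "isotropic n (W t)"
  by (rule isotropic_span) (use \<beta>_upper in \<open>auto simp: W_gen_defs form_simps\<close>)

lemma vdim_U1: "vdim U1 = \<gamma>1"
  unfolding vdim_span_unit_vec using \<gamma>1 \<gamma>2 \<gamma>3 by (simp add: U1_idx_def card_insert_if)

lemma vdim_U2: "vdim U2 = \<gamma>1 + \<gamma>2"
  unfolding vdim_span_unit_vec using \<gamma>1 \<gamma>2 \<gamma>3 by (simp add: U2_idx_def card_insert_if)

lemma vdim_U3: "vdim U3 = n"
  unfolding vdim_span_unit_vec by (simp add: U3_idx_def card_insert_if)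

lemma vdim_L: "vdim L = n"
  unfolding vdim_span_unit_vec by (simp add: L_idx_def card_insert_if)

lemma vdim_W: "vdim (W t) = \<beta>"
proof -
  have "vdim (W t) = card W_idx"
    by (rule vdim_span_pivots) (use \<beta>_upper in \<open>auto simp: W_gen_defs\<close>)
  then show ?thesis
    using \<beta>_lower \<beta>_upper by (simp add: W_idx_def card_insert_if)
qed

lemma W_gen_in_W: "p \<in> W_idx \<Longrightarrow> W_gen t p \<in> W t"
  by (rule VS.span_base) auto

lemma w_in_W: "w1 \<in> W t" "w2 t \<in> W t" "w3 \<in> W t" "w4 \<in> W t"
  using W_gen_in_W[of 2 t] W_gen_in_W[of 5 t] W_gen_in_W[of "2*n-1" t] W_gen_in_W[of "2*n-2" t]
  by (simp_all add: W_idx_def W_gen_def)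

definition d1 :: "'a::field vec" where "d1 = unit_vec 3 + unit_vec 4"
definition d4 :: "'a::field \<Rightarrow> 'a vec" where "d4 t = vsmult t (unit_vec 3) + unit_vec 4 + unit_vec 5"

lemma d1_in_L: "d1 \<in> L"
  unfolding d1_def by (intro VS.span_add unit_vec_in_span) (auto simp: L_idx_def)

lemma d4_in_L: "d4 t \<in> L"
  unfolding d4_def by (intro VS.span_add VS.span_scale unit_vec_in_span) (auto simp: L_idx_def)

lemma d1_in_D1: "d1 \<in> D1 n L (W t) U1 U3"
proof -
  have "d1 \<in> perp n U1"
    by (rule in_perp_span) (use d1_in_L L_subset_ambient parameters in \<open>auto simp: U1_idx_def d1_def form_simps\<close>)
  moreover have "d1 \<in> U3 + W t"
  proof -
    have "0 - unit_vec 0 - unit_vec 1 - unit_vec 2 \<in> U3"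
      by (intro VS.span_diff VS.span_zero unit_vec_in_span) (auto simp: U3_idx_def)
    moreover have "d1 = (0 - unit_vec 0 - unit_vec 1 - unit_vec 2) + w1"
      by (simp add: fun_eq_iff d1_def w1_def)
    ultimately show ?thesis using w_in_W set_plus_intro by metis
  qed
  ultimately show ?thesis
    using d1_in_L by (simp add: D1_def)
qed

lemma d4_in_D4: "d4 t \<in> D4 L (W t) U2"
proof -
  have "0 - unit_vec 0 - vsmult t (unit_vec 1) \<in> U2"
    by (intro VS.span_diff VS.span_scale VS.span_zero unit_vec_in_span) (auto simp: U2_idx_def)
  moreover have "d4 t = (0 - unit_vec 0 - vsmult t (unit_vec 1)) + w2 t"
    by (simp add: fun_eq_iff d4_def w2_def)
  ultimately have "d4 t \<in> U2 + W t"
    using w_in_W set_plus_intro by metis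
  then show ?thesis
    using d4_in_L by (simp add: D4_def)
qed

lemma d4_minus_d1_in_D2: "d4 t - d1 \<in> D2 n L (W t) U2 U3"
proof -
  have "d4 t - d1 = (unit_vec 2 + vsmult (1 - t) (unit_vec 1)) + (w2 t - w1)"
    by (simp add: fun_eq_iff d4_def d1_def w1_def w2_def algebra_simps)
  moreover have "unit_vec 2 + vsmult (1 - t) (unit_vec 1) \<in> U3"
    by (intro VS.span_add VS.span_scale unit_vec_in_span) (auto simp: U3_idx_def)
  moreover have "w2 t - w1 \<in> W t"
    by (intro VS.span_diff w_in_W)
  moreover have "d4 t - d1 = vsmult (t - 1) (unit_vec 3) + unit_vec 5"
    by (simp add: fun_eq_iff d4_def d1_def algebra_simps)
  moreover have "vsmult (t - 1) (unit_vec 3) \<in> L"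
    by (intro VS.span_scale unit_vec_in_span) (auto simp: L_idx_def)
  moreover have "vsmult (t - 1) (unit_vec 3) \<in> perp n U2"
    by (rule in_perp_span) (use parameters in \<open>auto simp: U2_idx_def ambient_def form_simps\<close>)
  moreover have "unit_vec 5 \<in> L"
    by (rule unit_vec_in_span) (auto simp: L_idx_def)
  moreover have "unit_vec 5 \<in> perp n (W t)"
    by (rule in_perp_span) (use parameters in \<open>auto simp: W_gen_defs ambient_def form_simps\<close>)
  ultimately show ?thesis
    unfolding D2_def by (metis IntI set_plus_intro)
qed

lemma d1_d4_in_D3: "vsmult t d1 - d4 t \<in> D3 n L (W t) U1 U3"
proof -
  have "vsmult t d1 - d4 t = (vsmult (1 - t) (unit_vec 0) + (vsmult t w1 - w2 t)) + vsmult (- t) (unit_vec 2)"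
    by (simp add: fun_eq_iff d4_def d1_def w1_def w2_def algebra_simps)
  moreover have "vsmult (1 - t) (unit_vec 0) \<in> U1"
    by (intro VS.span_scale unit_vec_in_span) (auto simp: U1_idx_def)
  moreover have "vsmult t w1 - w2 t \<in> W t"
    by (intro VS.span_diff VS.span_scale w_in_W)
  moreover have "vsmult (- t) (unit_vec 2) \<in> U3"
    by (intro VS.span_scale unit_vec_in_span) (auto simp: U3_idx_def)
  moreover have "vsmult (- t) (unit_vec 2) \<in> perp n (W t)"
    by (rule in_perp_span) (use parameters in \<open>auto simp: W_gen_defs ambient_def form_simps\<close>)
  moreover have "vsmult t d1 - d4 t \<in> L"
    by (intro VS.span_diff VS.span_scale d1_in_L d4_in_L)
  ultimately show ?thesis
    unfolding D3_def by (metis IntI set_plus_intro)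
qed

lemma form_span_plus_W_eq_0:
  assumes "v \<in> VS.span (unit_vec ` P) + W s"
    and "\<And>p. p \<in> P \<Longrightarrow> form n (unit_vec p) z = 0" "\<And>q. q \<in> W_idx \<Longrightarrow> form n (W_gen s q) z = 0"
  shows "form n v z = 0"
  using assms(1)
proof (rule form_plus_left_eq_0)
  show "form n u z = 0" if "u \<in> VS.span (unit_vec ` P)" for u
    by (rule form_span_left_eq_0[OF that]) (use assms(2) in blast)
  show "form n w z = 0" if "w \<in> W s" for w
    by (rule form_span_left_eq_0[OF that]) (use assms(3) in blast)
qed

lemma U3_W_coord_relation:
  assumes "v \<in> U3 + W s"
  shows "v 3 = v 4 - (1 - s) * v 5"
proof -
  have "form n v (unit_vec (2*n-4) - unit_vec (2*n-5) + vsmult (1 - s) (unit_vec (2*n-6))) = 0"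
    by (rule form_span_plus_W_eq_0[OF assms])
      (use parameters in \<open>auto simp: U3_idx_def W_gen_defs form_simps\<close>)
  then show ?thesis
    by (simp add: form_linear form_unit_vec_right algebra_simps)
qed

lemma L_Int_U3_W_coord_eq_0:
  assumes L: "v \<in> L" and U3W: "v \<in> U3 + W s" and i: "i \<notin> {3, 4, 5, 2*n-2, 2*n-1}"
  shows "v i = 0"
proof (cases "i \<in> L_idx")
  case True
  then consider "i = 2*n-3" | "n \<le> i" "i < 2*n-6"
    using i by (auto simp: L_idx_def)
  then show ?thesis
  proof cases
    case 1
    have "form n v (unit_vec 2) = 0"
      by (rule form_span_plus_W_eq_0[OF U3W])
        (use parameters in \<open>auto simp: U3_idx_def W_gen_defs form_simps\<close>)
    then show ?thesis using 1 by (simp add: form_unit_vec_right)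
  next
    case 2
    have "form n v (unit_vec j) = 0" if "6 \<le> j" "j < n" for j
      by (rule form_span_plus_W_eq_0[OF U3W])
        (use that parameters in \<open>auto simp: U3_idx_def W_gen_defs form_simps\<close>)
    from this[of "2*n-1-i"] show ?thesis using 2 by (simp add: form_unit_vec_right)
  qed
next
  case False
  then show ?thesis using span_unit_vec_coord_eq_0 L by blast
qed

lemma L_Int_U3_W_eq_0:
  assumes "v \<in> L" "v \<in> U3 + W s" "v 4 = 0" "v 5 = 0" "v (2*n-2) = 0" "v (2*n-1) = 0"
  shows "v = 0"
proof
  fix i
  show "v i = 0 i"
    using L_Int_U3_W_coord_eq_0[OF assms(1,2), of i] U3_W_coord_relation[OF assms(2)] assms(3-)
    by (cases "i \<in> {3, 4, 5, 2*n-2, 2*n-1}") auto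
qed

lemma L_coord_eq_0: "v \<in> L \<Longrightarrow> i \<notin> L_idx \<Longrightarrow> v i = 0"
  using span_unit_vec_coord_eq_0 by blast

lemma D_subset_L_Int_U3_W:
  shows "D1 n L (W s) U1 U3 \<subseteq> L \<inter> (U3 + W s)"
    and "D2 n L (W s) U2 U3 \<subseteq> L \<inter> (U3 + W s)"
    and "D3 n L (W s) U1 U3 \<subseteq> L \<inter> (U3 + W s)"
    and "D4 L (W s) U2 \<subseteq> L \<inter> (U3 + W s)"
proof -
  show "D1 n L (W s) U1 U3 \<subseteq> L \<inter> (U3 + W s)"
    by (auto simp: D1_def)
  show "D2 n L (W s) U2 U3 \<subseteq> L \<inter> (U3 + W s)"
    by (auto simp: D2_def elim!: set_plus_elim intro: VS.span_add)
  show "D4 L (W s) U2 \<subseteq> L \<inter> (U3 + W s)"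
    using set_plus_mono2[OF U2_subset_U3 order_refl] by (auto simp: D4_def)
  show "D3 n L (W s) U1 U3 \<subseteq> L \<inter> (U3 + W s)"
  proof
    fix v assume v: "v \<in> D3 n L (W s) U1 U3"
    then obtain u1 w u3 where u: "u1 \<in> U1" "w \<in> W s" "u3 \<in> U3" "v = u1 + w + u3"
      by (auto simp: D3_def elim!: set_plus_elim)
    have "u1 + u3 \<in> U3"
      using u U1_subset_U2 U2_subset_U3 by (blast intro: VS.span_add)
    moreover have "v = (u1 + u3) + w"
      using u(4) by (simp add: algebra_simps)
    ultimately show "v \<in> L \<inter> (U3 + W s)"
      using v u(2) by (auto simp: D3_def intro: set_plus_intro)
  qed
qed

lemma D1_coords:
  assumes "v \<in> D1 n L (W s) U1 U3"
  shows "v 5 = 0" "v (2*n-1) = 0"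
proof -
  have "v \<in> perp n U1" using assms by (simp add: D1_def)
  then have "form n v (unit_vec p) = 0" if "p \<in> U1_idx" for p
    using form_perp unit_vec_in_span[OF that] by blast
  from this[of "2*n-6"] this[of 0] show "v 5 = 0" "v (2*n-1) = 0"
    by (simp_all add: U1_idx_def form_unit_vec_right)
qed

lemma D4_coords:
  assumes "v \<in> D4 L (W s) U2"
  shows "v 4 = v 5" "v (2*n-2) = 0"
proof -
  have L: "v \<in> L" and U2W: "v \<in> U2 + W s" using assms by (auto simp: D4_def)
  have "form n v (unit_vec (2*n-5) - unit_vec (2*n-3) - unit_vec (2*n-6)) = 0"
    by (rule form_span_plus_W_eq_0[OF U2W]) (use parameters in \<open>auto simp: U2_idx_def W_gen_defs form_simps\<close>)
  moreover have "v 2 = 0" by (rule L_coord_eq_0[OF L]) (simp add: L_idx_def)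
  ultimately show "v 4 = v 5"
    by (simp add: form_linear form_unit_vec_right)
  have "form n v (unit_vec 1 + unit_vec 3) = 0"
    by (rule form_span_plus_W_eq_0[OF U2W]) (use parameters in \<open>auto simp: U2_idx_def W_gen_defs form_simps\<close>)
  moreover have "v (2*n-4) = 0" by (rule L_coord_eq_0[OF L]) (simp add: L_idx_def)
  ultimately show "v (2*n-2) = 0"
    by (simp add: form_linear form_unit_vec_right)
qed

text \<open>A vector of D2 is x + y with x \<in> perp U2 and y \<in> L \<inter> perp W; since L is isotropic, both
  summands are orthogonal to every vector of U2 \<inter> (W + L).\<close>
lemma D2_coords:
  assumes "v \<in> D2 n L (W s) U2 U3"
  shows "v 4 = 0" "v (2*n-1) + s * v (2*n-2) = 0"
proof -
  have v: "v \<in> perp n U2 \<inter> L + perp n (W s) \<inter> L" using assms by (simp add: D2_def)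
  have test: "form n v z = 0" if "z \<in> U2" "z = w - l" "w \<in> W s" "l \<in> L" for z w l
  proof (rule form_plus_left_eq_0[OF v])
    show "form n x z = 0" if "x \<in> perp n U2 \<inter> L" for x
      using form_perp \<open>z \<in> U2\<close> that by blast
    show "form n y z = 0" if y: "y \<in> perp n (W s) \<inter> L" for y
      using form_perp[of y n "W s" w] isotropic_L \<open>l \<in> L\<close> \<open>w \<in> W s\<close> y \<open>z = w - l\<close>
      by (auto simp: isotropic_def form_linear)
  qed
  have "form n v (unit_vec 0 + vsmult s (unit_vec 1)) = 0"
  proof (rule test)
    show "unit_vec 0 + vsmult s (unit_vec 1) \<in> U2"
      by (intro VS.span_add VS.span_scale unit_vec_in_span) (auto simp: U2_idx_def)
    show "unit_vec 0 + vsmult s (unit_vec 1) = w2 s - d4 s"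
      by (simp add: fun_eq_iff w2_def d4_def)
  qed (rule w_in_W, rule d4_in_L)
  then show "v (2*n-1) + s * v (2*n-2) = 0"
    by (simp add: form_linear form_unit_vec_right)
  have "form n v (unit_vec (2*n-5)) = 0"
  proof (rule test)
    show "unit_vec (2*n-5) \<in> U2" by (rule unit_vec_in_span) (auto simp: U2_idx_def)
    show "unit_vec (2*n-5) = (0 - w3) - (0 - unit_vec (2*n-1))" by (simp add: fun_eq_iff w3_def)
    show "0 - w3 \<in> W s" by (intro VS.span_diff VS.span_zero w_in_W)
    show "0 - unit_vec (2*n-1) \<in> L" by (intro VS.span_diff VS.span_zero unit_vec_in_span) (simp add: L_idx_def)
  qed
  then show "v 4 = 0"
    by (simp add: form_unit_vec_right)
qed

text \<open>A vector of D3 is x + y with x \<in> U1 + W and y \<in> U3 \<inter> perp W; since U3 is isotropic, both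
  summands are orthogonal to every vector of U3 + W that is orthogonal to U1 and W.\<close>
lemma D3_coords:
  assumes "v \<in> D3 n L (W s) U1 U3"
  shows "v 3 = 0" "v (2*n-1) + v (2*n-2) = 0"
proof -
  have L: "v \<in> L" and v: "v \<in> U1 + W s + U3 \<inter> perp n (W s)" using assms by (auto simp: D3_def)
  have test: "form n v z = 0"
    if "\<And>p. p \<in> U1_idx \<Longrightarrow> form n (unit_vec p) z = 0" "\<And>q. q \<in> W_idx \<Longrightarrow> form n (W_gen s q) z = 0"
      and "z = u + w" "u \<in> U3" "w \<in> W s" for z u w
  proof (rule form_plus_left_eq_0[OF v])
    show "form n x z = 0" if "x \<in> U1 + W s" for x
      using form_span_plus_W_eq_0[OF that] \<open>\<And>p. p \<in> U1_idx \<Longrightarrow> form n (unit_vec p) z = 0\<close>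
        \<open>\<And>q. q \<in> W_idx \<Longrightarrow> form n (W_gen s q) z = 0\<close> by blast
    show "form n y z = 0" if y: "y \<in> U3 \<inter> perp n (W s)" for y
      using form_perp[of y n "W s" w] isotropic_U3 \<open>u \<in> U3\<close> \<open>w \<in> W s\<close> y \<open>z = u + w\<close>
      by (auto simp: isotropic_def form_linear)
  qed
  have "form n v (unit_vec 0 + unit_vec 1 + unit_vec 3 + unit_vec 4) = 0"
  proof (rule test)
    show "unit_vec 0 + unit_vec 1 + unit_vec 3 + unit_vec 4 = (0 - unit_vec 2) + w1"
      by (simp add: fun_eq_iff w1_def)
    show "0 - unit_vec 2 \<in> U3"
      by (intro VS.span_diff VS.span_zero unit_vec_in_span) (auto simp: U3_idx_def)
  qed (use parameters w_in_W in \<open>auto simp: U1_idx_def W_gen_defs form_simps\<close>)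
  moreover have "v (2*n-4) = 0" "v (2*n-5) = 0"
    by (rule L_coord_eq_0[OF L], simp add: L_idx_def)+
  ultimately show "v (2*n-1) + v (2*n-2) = 0"
    by (simp add: form_linear form_unit_vec_right)
  have "form n v w4 = 0"
  proof (rule test)
    show "w4 = 0 + w4" by simp
  qed (use parameters w_in_W VS.span_zero in \<open>auto simp: U1_idx_def W_gen_defs form_simps\<close>)
  moreover have "v 1 = 0" by (rule L_coord_eq_0[OF L]) (simp add: L_idx_def)
  ultimately show "v 3 = 0"
    by (simp add: w4_def form_linear form_unit_vec_right)
qed

lemma isometry_image_in_D:
  assumes g: "g \<in> orth_group n"
    and stable: "g ` L = L" "g ` U1 = U1" "g ` U2 = U2" "g ` U3 = U3" and gW: "g ` W t = W s"
  shows "g d1 \<in> D1 n L (W s) U1 U3"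
    and "g (d4 t) \<in> D4 L (W s) U2"
    and "g (d4 t) - g d1 \<in> D2 n L (W s) U2 U3"
    and "vsmult t (g d1) - g (d4 t) \<in> D3 n L (W s) U1 U3"
proof -
  note sub = L_subset_ambient W_subset_ambient[of t] U1_subset_ambient U2_subset_ambient U3_subset_ambient
  have d_ambient: "d1 \<in> ambient n" "d4 t \<in> ambient n" "vsmult t d1 \<in> ambient n"
    using d1_in_L d4_in_L VS.span_scale[OF d1_in_L] L_subset_ambient by blast+
  show "g d1 \<in> D1 n L (W s) U1 U3"
    using imageI[OF d1_in_D1, of g t] orth_group_image_D1[OF g sub] stable gW by simp
  show "g (d4 t) \<in> D4 L (W s) U2"
    using imageI[OF d4_in_D4, of g t] orth_group_image_D4[OF g sub] stable gW by simp
  show "g (d4 t) - g d1 \<in> D2 n L (W s) U2 U3"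
    using imageI[OF d4_minus_d1_in_D2, of g t] orth_group_image_D2[OF g sub] stable gW
      orth_group_diff[OF g d_ambient(2,1)] by simp
  show "vsmult t (g d1) - g (d4 t) \<in> D3 n L (W s) U1 U3"
    using imageI[OF d1_d4_in_D3, of g t] orth_group_image_D3[OF g sub] stable gW
      orth_group_diff[OF g d_ambient(3,2)] orth_group_scale[OF g d_ambient(1)] by simp
qed

lemma isometry_fixing_flags_fixes_parameter:
  assumes g: "g \<in> orth_group n"
    and "g ` L = L" "g ` U1 = U1" "g ` U2 = U2" "g ` U3 = U3" "g ` W t = W s"
  shows "t = s"
proof (rule ccontr)
  assume "t \<noteq> s"
  define x where "x = g d1"
  define y where "y = g (d4 t)"
  note D = isometry_image_in_D[OF assms, folded x_def y_def]
  note rel = U3_W_coord_relation[OF D_subset_L_Int_U3_W(1)[THEN subsetD, OF D(1), THEN IntD2]]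
    U3_W_coord_relation[OF D_subset_L_Int_U3_W(4)[THEN subsetD, OF D(2), THEN IntD2]]
  note x_coords = D1_coords[OF D(1)] and y_coords = D4_coords[OF D(2)]
    and diff_coords = D2_coords[OF D(3)] and comb_coords = D3_coords[OF D(4)]
  have "(t - s) * x 4 = 0"
    using rel x_coords y_coords diff_coords(1) comb_coords(1) by (simp add: algebra_simps)
  then have x4: "x 4 = 0" using \<open>t \<noteq> s\<close> by simp
  have "(t - s) * x (2*n-2) = 0"
    using x_coords y_coords diff_coords(2) comb_coords(2) by (simp add: algebra_simps)
  then have x2n2: "x (2*n-2) = 0" using \<open>t \<noteq> s\<close> by simp
  have "x = 0"
    using D_subset_L_Int_U3_W(1) D(1) x4 x2n2 x_coords by (intro L_Int_U3_W_eq_0) auto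
  then have "g d1 = g 0"
    using orth_group_zero[OF g] by (simp add: x_def)
  moreover have "(d1::'a vec) \<in> ambient n" "(0::'a vec) \<in> ambient n"
    using d1_in_L L_subset_ambient by (auto simp: ambient_def)
  ultimately have "(d1::'a vec) = 0"
    by (rule inj_onD[OF orth_group_inj_on[OF g]])
  then show False
    using fun_cong[of d1 0 3] by (simp add: d1_def)
qed

definition triple :: "'a::field \<Rightarrow> 'a vec set list \<times> 'a vec set list \<times> 'a vec set list" where
  "triple t = ([L], [W t], [U1, U2, U3])"

lemma triple_in_triples: "triple t \<in> triples n [n] [\<beta>] [\<gamma>1, \<gamma>2, n - \<gamma>1 - \<gamma>2]"
proof -
  have "[L :: 'a vec set] \<in> flags n [n]"
    by (rule flags_singleI) (simp_all add: subsp_span L_subset_ambient vdim_L isotropic_L)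
  moreover have "[W t] \<in> flags n [\<beta>]"
    by (rule flags_singleI) (simp_all add: subsp_span W_subset_ambient vdim_W isotropic_W)
  moreover have "[U1, U2, U3 :: 'a vec set] \<in> flags n [\<gamma>1, \<gamma>2, n - \<gamma>1 - \<gamma>2]"
    by (rule flags_threeI) (use subsp_span U1_subset_ambient U2_subset_ambient U3_subset_ambient
        vdim_U1 vdim_U2 vdim_U3 isotropic_U3 U1_subset_U2 U2_subset_U3 parameters in auto)
  ultimately show ?thesis by (simp add: triples_def triple_def)
qed

lemma triple_orbit_rel_imp_eq:
  assumes "(triple t, triple s) \<in> orbit_rel n [n] [\<beta>] [\<gamma>1, \<gamma>2, n - \<gamma>1 - \<gamma>2]"
  shows "t = s"
proof -
  have "\<exists>g\<in>orth_group n. act_flag g [L] = [L] \<and> act_flag g [W t] = [W s]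
      \<and> act_flag g [U1, U2, U3] = [U1, U2, U3 :: 'a vec set]"
    using assms unfolding orbit_rel_def triple_def by simp
  then obtain g where g: "g \<in> orth_group n"
    and "act_flag g [L] = [L]" "act_flag g [W t] = [W s]" "act_flag g [U1, U2, U3] = [U1, U2, U3]"
    by blast
  then have "g ` L = L" "g ` U1 = U1" "g ` U2 = U2" "g ` U3 = U3" "g ` W t = W s"
    by (simp_all add: act_flag_def)
  then show ?thesis
    by (rule isometry_fixing_flags_fixes_parameter[OF g])
qed

lemma infinite_orbits:
  assumes "infinite (UNIV :: 'a::field set)"
  shows "infinite ((triples n [n] [\<beta>] [\<gamma>1, \<gamma>2, n - \<gamma>1 - \<gamma>2] :: ('a vec set list \<times> 'a vec set list \<times> 'a vec set list) set)
                   // orbit_rel n [n] [\<beta>] [\<gamma>1, \<gamma>2, n - \<gamma>1 - \<gamma>2])"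
  by (rule infinite_quotient[OF assms, of triple])
    (rule triple_in_triples, rule orbit_rel_refl[OF triple_in_triples], erule triple_orbit_rel_imp_eq)

end

theorem proposition3p13:
  fixes n \<beta> \<gamma>1 \<gamma>2 \<gamma>3 :: nat
  assumes "infinite (UNIV :: 'a::field set)"
    and "(2::'a) \<noteq> 0"
    and "4 \<le> \<beta>" and "\<beta> \<le> n - 2"
    and "\<gamma>1 \<ge> 2" and "\<gamma>2 \<ge> 2" and "\<gamma>3 \<ge> 2"
    and "\<gamma>1 + \<gamma>2 + \<gamma>3 = n"
  shows "infinite ((triples n [n] [\<beta>] [\<gamma>1, \<gamma>2, \<gamma>3] :: ('a vec set list \<times> 'a vec set list \<times> 'a vec set list) set)
                   // orbit_rel n [n] [\<beta>] [\<gamma>1, \<gamma>2, \<gamma>3])"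
proof -
  \<comment> \<open>The construction works in every characteristic.\<close>
  define m where "m = n - 6"
  have n: "n = m + 6"
    using assms(5-8) unfolding m_def by linarith
  have "triple_family m \<gamma>1 \<gamma>2 \<beta>"
    by unfold_locales (use assms n in linarith)+
  moreover have "\<gamma>3 = m + 6 - \<gamma>1 - \<gamma>2"
    using assms(8) n by linarith
  ultimately show ?thesis
    using triple_family.infinite_orbits[OF _ assms(1)] unfolding n by blast
qed

end
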